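(* Let $f(x)=1+x\in\mathbb F_2[x]$. For an integer $r\ge1$ let $B=\{(i,j)\in\mathbb Z^2:0\le i\le j\le r-1\}$, and for $p\in(0,1)$ let $B^*\subseteq B$ be a random subset containing each site of $B$ independently with probability $p$. Let $F_r=\mathrm{span}_{\mathbb F_2}\{x^i f(x)^{\,r-1-j}:(i,j)\in B^*\}$, a subspace of the $r$-dimensional space of polynomials in $\mathbb F_2[x]$ of degree at most $r-1$, and let $d_r=\dim F_r$. Then for every $p\in(0,1)$ and every $\kappa>0$ there exist constants $c>0$ and $C>0$ such that for all $L\ge2$, with $r=\lceil \tfrac{c}{p^{3}}\log L\rceil$, $$1-\mathrm{Prob}[d_r=r]\le C\,L^{-\kappa}.$$ (In particular the exponent can be taken larger than $3$.)
   Context: Here $x^i f^{r-1-j}$ for a site $(i,j)$ represents, in the polynomial representation of the cubic-lattice fractal code, the pattern of excitations on the bottom row of $B$ that can be absorbed by a removed stabilizer term at $(i,j)$; $d_r=r$ means every polynomial of degree at most $r-1$ lies in $F_r$. *)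

theory Defs
  imports Complex_Main "HOL-Library.Z2" "HOL-Computational_Algebra.Polynomial"
begin

definition fpoly :: "bit poly" where
  "fpoly = [:1, 1:]"

definition siteB :: "nat \<Rightarrow> (nat \<times> nat) set" where
  "siteB r = {(i, j). i \<le> j \<and> j \<le> r - 1}"

definition Fspace :: "nat \<Rightarrow> (nat \<times> nat) set \<Rightarrow> bit poly set" where
  "Fspace r S = module.span (smult :: bit \<Rightarrow> bit poly \<Rightarrow> bit poly)
      ((\<lambda>(i, j). monom 1 i * fpoly ^ (r - 1 - j)) ` S)"

definition dr :: "nat \<Rightarrow> (nat \<times> nat) set \<Rightarrow> nat" where
  "dr r S = vector_space.dim (smult :: bit \<Rightarrow> bit poly \<Rightarrow> bit poly) (Fspace r S)"

definition probB :: "real \<Rightarrow> nat \<Rightarrow> ((nat \<times> nat) set \<Rightarrow> bool) \<Rightarrow> real" where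
  "probB p r E = (\<Sum>S\<in>Pow (siteB r).
      (if E S then p ^ card S * (1 - p) ^ (card (siteB r) - card S) else 0))"

end

theory Submission
  imports Defs "HOL-Library.Indicator_Function"
begin

text \<open>If \<open>F_r\<close> is a proper subspace of the polynomials of degree \<open>< r\<close>, some linear
  functional \<open>\<phi>\<close> vanishes on all generators but not on all monomials. Multiplication by
  \<open>f = 1 + x\<close> acts on the sequence \<open>c i = \<phi>(x^i)\<close> as the forward difference, so
  \<open>\<phi>(x^i f^k)\<close> is the \<open>k\<close>-th difference of \<open>c\<close> at \<open>i\<close>: failure means that \<open>B*\<close> avoids the
  support of the difference triangle of some nonzero \<open>c \<in> F_2^r\<close>, which has probability
  \<open>(1 - p)^W\<close> for the weight \<open>W\<close> of the triangle. For the union bound over \<open>c\<close> two estimates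
  suffice: \<open>W \<ge> r\<close>, and \<open>W \<ge> K\<close> times the weight of the sparsest of the first \<open>K\<close> rows,
  where at most \<open>2^k\<close> sequences share a given row \<open>k\<close>. Together they bound the failure
  probability by \<open>K 2^K \<rho>^r\<close> with \<open>\<rho> = s (1 + s^K) < 1\<close>, \<open>s = \<surd>(1 - p)\<close>, for \<open>K\<close> large,
  and \<open>r \<ge> c log L\<close> turns this into \<open>L^-\<kappa>\<close>.\<close>

declare add_bit_eq_xor [simp del] mult_bit_eq_and [simp del]
  \<comment> \<open>otherwise the simplifier turns the field operations of \<open>bit\<close> into \<open>xor\<close> and \<open>and\<close>\<close>

interpretation poly_vs: vector_space "smult :: bit \<Rightarrow> bit poly \<Rightarrow> bit poly"
  by unfold_locales (simp_all only: smult_add_right smult_add_left smult_smult smult_1_left)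

lemma bit_add_cancel_left: "(a::bit) + (a + b) = b"
  by (cases a; cases b) simp_all

lemma bit_eqI: "((a::bit) \<noteq> 0 \<longleftrightarrow> b \<noteq> 0) \<Longrightarrow> a = b"
  by (cases a; cases b) simp_all

lemma (in vector_space) exists_functional_vanishing_on:
  assumes v: "v \<notin> span G"
  shows "\<exists>\<phi>. Vector_Spaces.linear scale (*) \<phi> \<and> (\<forall>g\<in>G. \<phi> g = 0) \<and> \<phi> v = 1"
proof -
  interpret scalars: vector_space "(*) :: 'a \<Rightarrow> 'a \<Rightarrow> 'a"
    by unfold_locales (simp_all add: algebra_simps)
  interpret vector_space_pair scale "(*) :: 'a \<Rightarrow> 'a \<Rightarrow> 'a" ..
  obtain B where B: "B \<subseteq> span G" "independent B" "span G \<subseteq> span B"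
    by (rule basis_exists[of "span G"])
  have vB: "v \<notin> span B"
    using v span_minimal[OF B(1)] by auto
  have indep: "independent (insert v B)"
    using independent_insertI[OF vB B(2)] .
  define \<phi> where "\<phi> = construct (insert v B) (\<lambda>b. if b = v then 1 else 0)"
  have lin: "Vector_Spaces.linear scale (*) \<phi>"
    unfolding \<phi>_def using linear_construct[OF indep] .
  have "\<phi> b = 0" if "b \<in> B" for b
    using that vB span_base[of b B] by (auto simp: \<phi>_def construct_basis[OF indep])
  then have "\<phi> g = 0" if "g \<in> G" for g
    using linear_eq_on[OF lin linear_zero, of g B] B(3) span_base[OF that] by auto
  moreover have "\<phi> v = 1"
    by (simp add: \<phi>_def construct_basis[OF indep])
  ultimately show ?thesis using lin by blast
qed

definition polys_below :: "nat \<Rightarrow> bit poly set" where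
  "polys_below r = {g. \<forall>i\<ge>r. coeff g i = 0}"

lemma subspace_polys_below: "poly_vs.subspace (polys_below r)"
  unfolding poly_vs.subspace_def polys_below_def by (auto simp: coeff_smult)

lemma span_monoms_eq_polys_below: "poly_vs.span (monom 1 ` {..<r}) = polys_below r"
proof (rule poly_vs.span_subspace)
  show "monom 1 ` {..<r} \<subseteq> polys_below r"
    by (auto simp: polys_below_def)
  show "polys_below r \<subseteq> poly_vs.span (monom 1 ` {..<r})"
  proof
    fix g assume g: "g \<in> polys_below r"
    have "g = (\<Sum>i<r. smult (coeff g i) (monom 1 i))"
      using g by (auto simp: polys_below_def poly_eq_iff coeff_sum smult_monom not_less)
    also have "\<dots> \<in> poly_vs.span (monom 1 ` {..<r})"
      by (intro poly_vs.span_sum poly_vs.span_scale poly_vs.span_base) auto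
    finally show "g \<in> poly_vs.span (monom 1 ` {..<r})" .
  qed
qed (rule subspace_polys_below)

lemma independent_monoms: "poly_vs.independent (monom 1 ` A :: bit poly set)"
  unfolding poly_vs.independent_explicit_module
proof (intro allI impI)
  fix T :: "bit poly set" and u v
  assume T: "finite T" "T \<subseteq> monom 1 ` A" and sum0: "(\<Sum>w\<in>T. smult (u w) w) = 0"
    and v: "v \<in> T"
  obtain m where m: "v = monom 1 m" using T v by auto
  have "0 = coeff (\<Sum>w\<in>T. smult (u w) w) m"
    by (simp add: sum0)
  also have "\<dots> = (\<Sum>w\<in>T. if w = v then u w else 0)"
    unfolding coeff_sum
    by (intro sum.cong refl) (use T m in \<open>auto simp: monom_eq_iff'\<close>)
  also have "\<dots> = u v"
    using T v by simp
  finally show "u v = 0" ..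
qed

lemma dim_polys_below: "poly_vs.dim (polys_below r) = r"
proof -
  have "poly_vs.dim (polys_below r) = card (monom 1 ` {..<r} :: bit poly set)"
    unfolding span_monoms_eq_polys_below[symmetric]
    by (rule poly_vs.dim_span_eq_card_independent[OF independent_monoms])
  also have "\<dots> = r"
    by (subst card_image) (auto simp: inj_on_def monom_eq_iff')
  finally show ?thesis .
qed

lemma generator_in_polys_below:
  assumes "(i, j) \<in> siteB r" "1 \<le> r"
  shows "monom 1 i * fpoly ^ (r - 1 - j) \<in> polys_below r"
proof -
  have "degree (monom (1::bit) i * fpoly ^ (r - 1 - j)) \<le> i + (r - 1 - j)"
    using degree_mult_le[of "monom (1::bit) i" "fpoly ^ (r - 1 - j)"]
      degree_monom_le[of "1::bit" i] degree_power_le[of fpoly "r - 1 - j"]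
    by (simp add: fpoly_def)
  also have "\<dots> < r"
    using assms by (auto simp: siteB_def)
  finally show ?thesis
    by (auto simp: polys_below_def intro: coeff_eq_0)
qed

lemma Fspace_subset_polys_below:
  "1 \<le> r \<Longrightarrow> S \<subseteq> siteB r \<Longrightarrow> Fspace r S \<subseteq> polys_below r"
  unfolding Fspace_def using generator_in_polys_below subspace_polys_below
  by (intro poly_vs.span_minimal) auto

lemma dr_eq_if_monoms_in_Fspace:
  assumes "1 \<le> r" "S \<subseteq> siteB r" "\<forall>m<r. monom 1 m \<in> Fspace r S"
  shows "dr r S = r"
proof -
  have "polys_below r \<subseteq> Fspace r S"
    unfolding span_monoms_eq_polys_below[symmetric] Fspace_def
    using assms(3) by (intro poly_vs.span_minimal) (auto simp: Fspace_def poly_vs.subspace_span)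
  then have "Fspace r S = polys_below r"
    using Fspace_subset_polys_below[OF assms(1,2)] by blast
  then show ?thesis
    by (simp add: dr_def dim_polys_below)
qed

definition fdiff :: "(nat \<Rightarrow> bit) \<Rightarrow> nat \<Rightarrow> bit" where
  "fdiff c i = c i + c (Suc i)"

lemma funpow_fdiff_Suc: "(fdiff ^^ Suc k) c = (fdiff ^^ k) (fdiff c)"
  by (simp add: funpow_Suc_right del: funpow.simps)

lemma monom_times_fpoly: "monom 1 i * fpoly = monom 1 i + monom (1::bit) (Suc i)"
proof -
  have fpoly: "fpoly = 1 + monom 1 1"
    by (simp add: fpoly_def poly_eq_iff coeff_pCons split: nat.split)
  show ?thesis
    unfolding fpoly by (simp add: distrib_left mult_monom)
qed

lemma linear_functional_on_generator:
  assumes lin: "Vector_Spaces.linear smult (*) \<phi>"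
  shows "\<phi> (monom 1 i * fpoly ^ k) = (fdiff ^^ k) (\<lambda>i. \<phi> (monom 1 i)) i"
proof (induction k arbitrary: i)
  case 0
  then show ?case by simp
next
  case (Suc k)
  interpret \<phi>: Vector_Spaces.linear smult "(*)" \<phi> by (rule lin)
  have "monom 1 i * fpoly ^ Suc k = monom 1 i * fpoly ^ k + monom 1 (Suc i) * fpoly ^ k"
    by (simp add: mult.assoc[symmetric] monom_times_fpoly distrib_right)
  then show ?case
    using Suc.IH by (simp add: \<phi>.add fdiff_def)
qed

lemma funpow_fdiff_cong:
  assumes "\<forall>i<n. c i = c' i" "i + k < n"
  shows "(fdiff ^^ k) c i = (fdiff ^^ k) c' i"
  using assms
proof (induction k arbitrary: c c' n)
  case 0
  then show ?case by simp
next
  case (Suc k)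
  have "\<forall>i<n - 1. fdiff c i = fdiff c' i"
    using Suc.prems(1) by (auto simp: fdiff_def)
  then show ?case
    using Suc.IH[of "n - 1" "fdiff c" "fdiff c'"] Suc.prems(2) by (simp add: funpow_fdiff_Suc del: funpow.simps)
qed

lemma eq_on_if_fdiff_eq_on:
  assumes "c 0 = c' 0" "\<forall>i. Suc i < n \<longrightarrow> fdiff c i = fdiff c' i"
  shows "\<forall>i<n. c i = c' i"
proof (intro allI impI)
  fix i assume "i < n"
  then show "c i = c' i"
  proof (induction i)
    case (Suc i)
    have "c (Suc i) = c i + fdiff c i" and "c' (Suc i) = c' i + fdiff c' i"
      by (simp_all add: fdiff_def bit_add_cancel_left)
    then show ?case
      using Suc assms(2) by simp
  qed (use assms(1) in simp)
qed

lemma eq_on_if_funpow_fdiff_eq_on: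
  assumes "\<forall>i. i + k < n \<longrightarrow> (fdiff ^^ k) c i = (fdiff ^^ k) c' i"
    and "\<forall>j<k. (fdiff ^^ j) c 0 = (fdiff ^^ j) c' 0"
  shows "\<forall>i<n. c i = c' i"
  using assms
proof (induction k arbitrary: c c' n)
  case 0
  then show ?case by simp
next
  case (Suc k)
  have "\<forall>i. i + k < n - 1 \<longrightarrow> (fdiff ^^ k) (fdiff c) i = (fdiff ^^ k) (fdiff c') i"
    using Suc.prems(1) by (simp add: funpow_fdiff_Suc[symmetric])
  moreover have "\<forall>j<k. (fdiff ^^ j) (fdiff c) 0 = (fdiff ^^ j) (fdiff c') 0"
    using Suc.prems(2) by (auto simp: funpow_fdiff_Suc[symmetric])
  ultimately have "\<forall>i<n - 1. fdiff c i = fdiff c' i"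
    by (rule Suc.IH)
  moreover have "c 0 = c' 0"
    using Suc.prems(2) by force
  ultimately show ?case
    by (intro eq_on_if_fdiff_eq_on) auto
qed

definition diff_row :: "nat \<Rightarrow> (nat \<Rightarrow> bit) \<Rightarrow> nat \<Rightarrow> nat set" where
  "diff_row n c k = {i. i + k < n \<and> (fdiff ^^ k) c i \<noteq> 0}"

definition diff_weight :: "nat \<Rightarrow> (nat \<Rightarrow> bit) \<Rightarrow> nat" where
  "diff_weight n c = (\<Sum>k<n. card (diff_row n c k))"

lemma finite_diff_row [simp]: "finite (diff_row n c k)"
  by (rule finite_subset[of _ "{..<n}"]) (auto simp: diff_row_def)

lemma diff_row_eq_empty: "n \<le> k \<Longrightarrow> diff_row n c k = {}"
  by (auto simp: diff_row_def)

lemma diff_weight_Suc: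
  "diff_weight (Suc n) c = card {i. i < Suc n \<and> c i \<noteq> 0} + diff_weight n (fdiff c)"
proof -
  have "diff_row (Suc n) c (Suc k) = diff_row n (fdiff c) k" for k
    by (auto simp: diff_row_def funpow_fdiff_Suc simp del: funpow.simps)
  moreover have "diff_row (Suc n) c 0 = {i. i < Suc n \<and> c i \<noteq> 0}"
    by (auto simp: diff_row_def)
  ultimately show ?thesis
    by (simp add: diff_weight_def sum.lessThan_Suc_shift del: sum.lessThan_Suc)
qed

text \<open>Either the first difference is again nonzero, or the sequence is a nonzero
  constant on \<open>[0, n]\<close> and its own row is full.\<close>

lemma length_le_diff_weight: "\<exists>i<n. c i \<noteq> 0 \<Longrightarrow> n \<le> diff_weight n c"
proof (induction n arbitrary: c)
  case 0
  then show ?case by simp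
next
  case (Suc n)
  show ?case
  proof (cases "\<exists>i<n. fdiff c i \<noteq> 0")
    case True
    have "{i. i < Suc n \<and> c i \<noteq> 0} \<noteq> {}"
      using Suc.prems by auto
    then have "1 \<le> card {i. i < Suc n \<and> c i \<noteq> 0}"
      by (simp add: Suc_le_eq card_gt_0_iff)
    with Suc.IH[OF True] show ?thesis
      by (simp add: diff_weight_Suc)
  next
    case False
    have "fdiff (\<lambda>_. c 0) i = 0" for i
      by (cases "c 0") (simp_all add: fdiff_def)
    with False have const: "\<forall>i<Suc n. c i = c 0"
      by (intro eq_on_if_fdiff_eq_on[of c "\<lambda>_. c 0"]) auto
    have "c i \<noteq> 0" if "i < Suc n" for i
      using Suc.prems const that by metis
    then have "{i. i < Suc n \<and> c i \<noteq> 0} = {..<Suc n}"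
      by auto
    then show ?thesis
      by (simp add: diff_weight_Suc)
  qed
qed

definition diff_support :: "nat \<Rightarrow> (nat \<Rightarrow> bit) \<Rightarrow> (nat \<times> nat) set" where
  "diff_support r c = {(i, j). (i, j) \<in> siteB r \<and> (fdiff ^^ (r - 1 - j)) c i \<noteq> 0}"

lemma card_diff_support:
  assumes r: "1 \<le> r"
  shows "card (diff_support r c) = diff_weight r c"
proof -
  define T where "T = (SIGMA k:{..<r}. diff_row r c k)"
  define g where "g = (\<lambda>(k::nat, i::nat). (i, r - 1 - k))"
  have "inj_on g T"
    by (auto simp: inj_on_def g_def T_def)
  moreover have "g ` T = diff_support r c"
  proof
    show "g ` T \<subseteq> diff_support r c"
      using r by (auto simp: g_def T_def diff_support_def diff_row_def siteB_def)
    show "diff_support r c \<subseteq> g ` T"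
    proof
      fix x assume "x \<in> diff_support r c"
      then obtain i j where "x = (i, j)" "i \<le> j" "j \<le> r - 1" "(fdiff ^^ (r - 1 - j)) c i \<noteq> 0"
        by (auto simp: diff_support_def siteB_def)
      then have "(r - 1 - j, i) \<in> T" "g (r - 1 - j, i) = x"
        using r by (auto simp: g_def T_def diff_row_def)
      then show "x \<in> g ` T"
        by force
    qed
  qed
  ultimately have "card (diff_support r c) = card T"
    using card_image by fastforce
  then show ?thesis
    by (simp add: T_def diff_weight_def card_SigmaI)
qed

text \<open>The annihilating functional \<open>\<phi>\<close> is encoded by the set \<open>A\<close> of \<open>i < r\<close> with \<open>\<phi>(x^i) = 1\<close>.\<close>

lemma avoids_diff_support_if_dr_ne:
  assumes r: "1 \<le> r" and S: "S \<subseteq> siteB r" and d: "dr r S \<noteq> r"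
  shows "\<exists>A\<in>Pow {..<r} - {{}}. S \<inter> diff_support r (indicator A) = {}"
proof -
  obtain m where m: "m < r" "monom 1 m \<notin> Fspace r S"
    using dr_eq_if_monoms_in_Fspace[OF r S] d by blast
  obtain \<phi> where lin: "Vector_Spaces.linear smult (*) \<phi>"
    and vanish: "\<forall>(i, j)\<in>S. \<phi> (monom 1 i * fpoly ^ (r - 1 - j)) = 0"
    and "\<phi> (monom 1 m) = 1"
    using poly_vs.exists_functional_vanishing_on[OF m(2)[unfolded Fspace_def]] by fastforce
  define A where "A = {i. i < r \<and> \<phi> (monom 1 i) \<noteq> 0}"
  have A: "A \<in> Pow {..<r} - {{}}"
    using m(1) \<open>\<phi> (monom 1 m) = 1\<close> by (auto simp: A_def)
  have agree: "\<forall>i<r. indicator A i = \<phi> (monom 1 i)"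
    by (auto simp: A_def indicator_def)
  have "(fdiff ^^ (r - 1 - j)) (indicator A) i = 0" if "(i, j) \<in> S" for i j
  proof -
    have "i + (r - 1 - j) < r"
      using that S r by (auto simp: siteB_def)
    then have "(fdiff ^^ (r - 1 - j)) (indicator A) i = \<phi> (monom 1 i * fpoly ^ (r - 1 - j))"
      using funpow_fdiff_cong[OF agree] linear_functional_on_generator[OF lin] by simp
    then show ?thesis
      using vanish that by auto
  qed
  then have "S \<inter> diff_support r (indicator A) = {}"
    by (auto simp: diff_support_def)
  with A show ?thesis by blast
qed

lemma finite_siteB [simp]: "finite (siteB r)"
  by (rule finite_subset[of _ "{..r} \<times> {..r}"]) (auto simp: siteB_def)

lemma probB_avoid:
  assumes X: "X \<subseteq> siteB r"
  shows "probB p r (\<lambda>S. S \<inter> X = {}) = (1 - p) ^ card X"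
proof -
  define q where "q x = (if x \<in> X then 0 else p)" for x :: "nat \<times> nat"
  have "probB p r (\<lambda>S. S \<inter> X = {})
      = (\<Sum>S\<in>Pow (siteB r). (\<Prod>x\<in>S. q x) * (\<Prod>x\<in>siteB r - S. 1 - p))"
    unfolding probB_def
  proof (intro sum.cong refl)
    fix S assume S: "S \<in> Pow (siteB r)"
    then have "finite S"
      by (auto intro: finite_subset)
    with S have "card (siteB r - S) = card (siteB r) - card S"
      by (simp add: card_Diff_subset)
    moreover have "(\<Prod>x\<in>S. q x) = (if S \<inter> X = {} then p ^ card S else 0)"
    proof (cases "S \<inter> X = {}")
      case True
      then have "(\<Prod>x\<in>S. q x) = (\<Prod>x\<in>S. p)"
        by (intro prod.cong) (auto simp: q_def)
      with True show ?thesis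
        by simp
    next
      case False
      with \<open>finite S\<close> show ?thesis
        by (auto simp: q_def intro: prod_zero)
    qed
    ultimately show "(if S \<inter> X = {} then p ^ card S * (1 - p) ^ (card (siteB r) - card S) else 0)
        = (\<Prod>x\<in>S. q x) * (\<Prod>x\<in>siteB r - S. 1 - p)"
      by simp
  qed
  also have "\<dots> = (\<Prod>x\<in>siteB r. q x + (1 - p))"
    by (rule prod_add[symmetric]) simp
  also have "\<dots> = (\<Prod>x\<in>siteB r. if x \<in> X then 1 - p else 1)"
    by (intro prod.cong) (auto simp: q_def)
  also have "\<dots> = (1 - p) ^ card X"
    using X by (simp add: prod.If_cases Int_absorb1)
  finally show ?thesis .
qed

lemma probB_compl: "1 - probB p r E = probB p r (\<lambda>S. \<not> E S)"
proof -
  have "probB p r E + probB p r (\<lambda>S. \<not> E S) = probB p r (\<lambda>S. S \<inter> {} = {})"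
    unfolding probB_def by (subst sum.distrib[symmetric]) (rule sum.cong, auto)
  then show ?thesis
    using probB_avoid[of "{}" r p] by simp
qed

lemma probB_le_sum:
  assumes I: "finite I" and p: "0 \<le> p" "p \<le> 1"
    and cover: "\<And>S. S \<subseteq> siteB r \<Longrightarrow> E S \<Longrightarrow> \<exists>a\<in>I. F a S"
  shows "probB p r E \<le> (\<Sum>a\<in>I. probB p r (F a))"
proof -
  define w where "w S = p ^ card S * (1 - p) ^ (card (siteB r) - card S)" for S :: "(nat \<times> nat) set"
  have w: "0 \<le> w S" for S
    using p by (simp add: w_def)
  have "(if E S then w S else 0) \<le> (\<Sum>a\<in>I. if F a S then w S else 0)" if "S \<in> Pow (siteB r)" for S
  proof (cases "E S")
    case True
    moreover have "S \<subseteq> siteB r"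
      using that by simp
    ultimately obtain a where a: "a \<in> I" "F a S"
      using cover by blast
    then have "w S = (if F a S then w S else 0)"
      by simp
    also have "\<dots> \<le> (\<Sum>a\<in>I. if F a S then w S else 0)"
      by (rule member_le_sum[OF a(1) _ I]) (simp add: w)
    finally show ?thesis
      using True by simp
  qed (simp add: sum_nonneg w)
  then have "(\<Sum>S\<in>Pow (siteB r). if E S then w S else 0)
      \<le> (\<Sum>S\<in>Pow (siteB r). \<Sum>a\<in>I. if F a S then w S else 0)"
    by (rule sum_mono)
  also have "\<dots> = (\<Sum>a\<in>I. \<Sum>S\<in>Pow (siteB r). if F a S then w S else 0)"
    by (rule sum.swap)
  finally show ?thesis
    by (simp only: probB_def w_def)
qed

lemma sum_Pow_power_card:
  "finite X \<Longrightarrow> (\<Sum>V\<in>Pow X. (t::real) ^ card V) = (1 + t) ^ card X"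
  using prod_add[of X "\<lambda>_. t" "\<lambda>_. 1"] by (simp add: add.commute)

text \<open>The set \<open>A\<close> is determined by row \<open>k\<close> of its difference triangle together with
  the \<open>k\<close> entries on the left edge above it, so at most \<open>2^k\<close> sets share a row.\<close>

lemma sum_power_card_diff_row_le:
  assumes t: "0 \<le> (t::real)"
  shows "(\<Sum>A\<in>Pow {..<r}. t ^ card (diff_row r (indicator A) k)) \<le> 2 ^ k * (1 + t) ^ (r - k)"
proof -
  define E where "E A = (diff_row r (indicator A) k, {j. j < k \<and> (fdiff ^^ j) (indicator A) 0 \<noteq> 0})"
    for A :: "nat set"
  have inj: "inj_on E (Pow {..<r})"
  proof (rule inj_onI)
    fix A A' assume A: "A \<in> Pow {..<r}" and A': "A' \<in> Pow {..<r}" and eq: "E A = E A'"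
    have "\<forall>i. i + k < r \<longrightarrow> (fdiff ^^ k) (indicator A) i = (fdiff ^^ k) (indicator A') i"
    proof (intro allI impI bit_eqI)
      fix i assume "i + k < r"
      have "i \<in> fst (E A) \<longleftrightarrow> i \<in> fst (E A')"
        using eq by simp
      with \<open>i + k < r\<close> show "(fdiff ^^ k) (indicator A) i \<noteq> 0 \<longleftrightarrow> (fdiff ^^ k) (indicator A') i \<noteq> 0"
        by (simp add: E_def diff_row_def)
    qed
    moreover have "\<forall>j<k. (fdiff ^^ j) (indicator A) 0 = (fdiff ^^ j) (indicator A') 0"
    proof (intro allI impI bit_eqI)
      fix j assume "j < k"
      have "j \<in> snd (E A) \<longleftrightarrow> j \<in> snd (E A')"
        using eq by simp
      with \<open>j < k\<close> show "(fdiff ^^ j) (indicator A) 0 \<noteq> 0 \<longleftrightarrow> (fdiff ^^ j) (indicator A') 0 \<noteq> 0"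
        by (simp add: E_def)
    qed
    ultimately have "\<forall>i<r. indicator A i = (indicator A' i :: bit)"
      by (rule eq_on_if_funpow_fdiff_eq_on)
    then show "A = A'"
      using A A' by (auto simp: indicator_def split: if_splits)
  qed
  have range: "E ` Pow {..<r} \<subseteq> Pow {..<r - k} \<times> Pow {..<k}"
    by (auto simp: E_def diff_row_def)
  have "(\<Sum>A\<in>Pow {..<r}. t ^ card (diff_row r (indicator A) k))
      = (\<Sum>e\<in>E ` Pow {..<r}. t ^ card (fst e))"
    unfolding sum.reindex[OF inj] by (simp add: E_def)
  also have "\<dots> \<le> (\<Sum>e\<in>Pow {..<r - k} \<times> Pow {..<k}. t ^ card (fst e))"
    using range t by (intro sum_mono2) auto
  also have "\<dots> = (\<Sum>V\<in>Pow {..<r - k}. \<Sum>_\<in>Pow {..<k}. t ^ card V)"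
    by (simp only: sum.cartesian_product case_prod_unfold)
  also have "\<dots> = 2 ^ k * (1 + t) ^ (r - k)"
    by (simp add: card_Pow sum_distrib_left[symmetric] sum_Pow_power_card)
  finally show ?thesis .
qed

lemma power_diff_weight_le:
  fixes s :: real
  assumes s: "0 \<le> s" "s \<le> 1" and K: "0 < K" and c: "\<exists>i<r. c i \<noteq> 0"
  shows "(s ^ 2) ^ diff_weight r c \<le> s ^ r * (\<Sum>k<K. (s ^ K) ^ card (diff_row r c k))"
proof -
  define u where "u k = card (diff_row r c k)" for k
  define k0 where "k0 = arg_min_on u {..<K}"
  have k0: "k0 < K" and least: "\<And>k. k < K \<Longrightarrow> u k0 \<le> u k"
    using K arg_min_if_finite(1)[of "{..<K}" u] arg_min_least[of "{..<K}" _ u]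
    by (auto simp: k0_def)
  have "K * u k0 \<le> (\<Sum>k<K. u k)"
    using sum_bounded_below[of "{..<K}" "u k0" u] least by simp
  also have "\<dots> \<le> (\<Sum>k<K + r. u k)"
    by (rule sum_mono2) auto
  also have "\<dots> = diff_weight r c"
    unfolding diff_weight_def u_def
    by (rule sum.mono_neutral_right) (auto simp: diff_row_eq_empty)
  finally have row_bound: "K * u k0 \<le> diff_weight r c" .
  have "(s ^ 2) ^ diff_weight r c = s ^ diff_weight r c * s ^ diff_weight r c"
    by (simp only: power2_eq_square power_mult_distrib)
  also have "\<dots> \<le> s ^ r * s ^ (K * u k0)"
    using length_le_diff_weight[OF c] row_bound s
    by (intro mult_mono power_decreasing) auto
  also have "\<dots> = s ^ r * (s ^ K) ^ u k0"
    by (simp add: power_mult)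
  also have "\<dots> \<le> s ^ r * (\<Sum>k<K. (s ^ K) ^ u k)"
    using k0 s by (intro mult_left_mono member_le_sum) auto
  finally show ?thesis
    by (simp add: u_def)
qed

lemma sum_power_diff_weight_le:
  fixes s :: real
  assumes s: "0 \<le> s" "s \<le> 1" and K: "0 < K"
  shows "(\<Sum>A\<in>Pow {..<r} - {{}}. (s ^ 2) ^ diff_weight r (indicator A))
    \<le> real K * 2 ^ K * (s * (1 + s ^ K)) ^ r"
proof -
  define t where "t = s ^ K"
  have t: "0 \<le> t" "t \<le> 1"
    using s by (auto simp: t_def power_le_one)
  have "(\<Sum>A\<in>Pow {..<r} - {{}}. (s ^ 2) ^ diff_weight r (indicator A))
      \<le> (\<Sum>A\<in>Pow {..<r} - {{}}. s ^ r * (\<Sum>k<K. t ^ card (diff_row r (indicator A) k)))"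
  proof (rule sum_mono)
    fix A assume "A \<in> Pow {..<r} - {{}}"
    then have "\<exists>i<r. indicator A i \<noteq> (0::bit)"
      by auto
    then show "(s ^ 2) ^ diff_weight r (indicator A)
        \<le> s ^ r * (\<Sum>k<K. t ^ card (diff_row r (indicator A) k))"
      unfolding t_def by (rule power_diff_weight_le[OF s K])
  qed
  also have "\<dots> \<le> (\<Sum>A\<in>Pow {..<r}. s ^ r * (\<Sum>k<K. t ^ card (diff_row r (indicator A) k)))"
    using s t by (intro sum_mono2) (auto intro!: sum_nonneg mult_nonneg_nonneg)
  also have "\<dots> = s ^ r * (\<Sum>k<K. \<Sum>A\<in>Pow {..<r}. t ^ card (diff_row r (indicator A) k))"
    by (simp add: sum_distrib_left[symmetric] sum.swap[of _ "Pow {..<r}"])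
  also have "\<dots> \<le> s ^ r * (\<Sum>k<K. 2 ^ K * (1 + t) ^ r)"
  proof (intro mult_left_mono sum_mono)
    fix k assume "k \<in> {..<K}"
    with t have "2 ^ k * (1 + t) ^ (r - k) \<le> 2 ^ K * (1 + t) ^ r"
      by (intro mult_mono power_increasing) auto
    with sum_power_card_diff_row_le[OF t(1)]
    show "(\<Sum>A\<in>Pow {..<r}. t ^ card (diff_row r (indicator A) k)) \<le> 2 ^ K * (1 + t) ^ r"
      by (rule order_trans)
  qed (use s in simp)
  also have "\<dots> = real K * 2 ^ K * (s * (1 + s ^ K)) ^ r"
    by (simp add: t_def power_mult_distrib)
  finally show ?thesis .
qed

lemma fail_probB_le:
  fixes p :: real
  assumes p: "0 < p" "p < 1" and K: "0 < K" and r: "1 \<le> r"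
  defines "s \<equiv> sqrt (1 - p)"
  shows "1 - probB p r (\<lambda>S. dr r S = r) \<le> real K * 2 ^ K * (s * (1 + s ^ K)) ^ r"
proof -
  have s: "0 \<le> s" "s \<le> 1" "s ^ 2 = 1 - p"
    using p by (auto simp: s_def)
  have "1 - probB p r (\<lambda>S. dr r S = r) = probB p r (\<lambda>S. dr r S \<noteq> r)"
    by (rule probB_compl)
  also have "\<dots> \<le> (\<Sum>A\<in>Pow {..<r} - {{}}. probB p r (\<lambda>S. S \<inter> diff_support r (indicator A) = {}))"
    using p avoids_diff_support_if_dr_ne[OF r] by (intro probB_le_sum) auto
  also have "\<dots> = (\<Sum>A\<in>Pow {..<r} - {{}}. (s ^ 2) ^ diff_weight r (indicator A))"
  proof (intro sum.cong refl)
    fix A :: "nat set"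
    have "diff_support r (indicator A) \<subseteq> siteB r"
      by (auto simp: diff_support_def)
    then show "probB p r (\<lambda>S. S \<inter> diff_support r (indicator A) = {})
        = (s ^ 2) ^ diff_weight r (indicator A)"
      using card_diff_support[OF r] s(3) by (simp add: probB_avoid)
  qed
  also have "\<dots> \<le> real K * 2 ^ K * (s * (1 + s ^ K)) ^ r"
    by (rule sum_power_diff_weight_le[OF s(1,2) K])
  finally show ?thesis .
qed

lemma fail_probB_le_geometric:
  fixes p :: real
  assumes p: "0 < p" "p < 1"
  shows "\<exists>K \<rho>. 0 < K \<and> 0 < \<rho> \<and> \<rho> < 1 \<and>
    (\<forall>r\<ge>1. 1 - probB p r (\<lambda>S. dr r S = r) \<le> K * \<rho> ^ r)"
proof -
  define s where "s = sqrt (1 - p)"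
  have s: "0 < s" "s < 1"
    using p by (auto simp: s_def)
  obtain K :: nat where K: "s ^ K < (1 - s) / 2"
    using real_arch_pow_inv[of "(1 - s) / 2" s] s by auto
  have "K \<noteq> 0"
    using K s by (cases K) auto
  have "s * (1 + s ^ K) \<le> s * (1 + (1 - s) / 2)"
    using K s by (intro mult_left_mono) auto
  also have "\<dots> < 1"
  proof -
    have "0 < (1 - s) * (2 - s)"
      using s by simp
    then show ?thesis
      by (simp add: field_simps algebra_simps)
  qed
  finally have "s * (1 + s ^ K) < 1" .
  with s \<open>K \<noteq> 0\<close> show ?thesis
    using fail_probB_le[OF p, of K] unfolding s_def [symmetric]
    by (intro exI[of _ "real K * 2 ^ K"] exI[of _ "s * (1 + s ^ K)"]) (auto simp: add_pos_nonneg)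
qed

lemma power_le_powr_of_le:
  fixes \<rho> x :: real
  assumes "0 < \<rho>" "\<rho> \<le> 1" "x \<le> real r"
  shows "\<rho> ^ r \<le> \<rho> powr x"
  using powr_mono'[OF assms(3), of \<rho>] assms(1,2) by (simp add: powr_realpow)

theorem lemma3:
  shows "\<forall>p::real. 0 < p \<and> p < 1 \<longrightarrow> (\<forall>\<kappa>::real. \<kappa> > 0 \<longrightarrow>
     (\<exists>c::real > 0. \<exists>C::real > 0. \<forall>L::nat. L \<ge> 2 \<longrightarrow>
        (let r = nat \<lceil>c / p ^ 3 * ln (real L)\<rceil> in
           1 - probB p r (\<lambda>S. dr r S = r) \<le> C * real L powr (- \<kappa>))))"
proof (intro allI impI)
  fix p \<kappa> :: real
  assume p: "0 < p \<and> p < 1" and \<kappa>: "\<kappa> > 0"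
  obtain K \<rho> where K: "0 < K" and \<rho>: "0 < \<rho>" "\<rho> < 1"
    and fail: "\<And>r. 1 \<le> r \<Longrightarrow> 1 - probB p r (\<lambda>S. dr r S = r) \<le> K * \<rho> ^ r"
    using fail_probB_le_geometric[of p] p by blast
  define c where "c = \<kappa> * p ^ 3 / - ln \<rho>"
  have "ln \<rho> < 0"
    using \<rho> by simp
  with p \<kappa> have c: "0 < c"
    by (simp add: c_def divide_pos_neg)
  have "1 - probB p r (\<lambda>S. dr r S = r) \<le> K * real L powr - \<kappa>"
    if L: "2 \<le> L" and r: "r = nat \<lceil>c / p ^ 3 * ln (real L)\<rceil>" for L r
  proof -
    define x where "x = c / p ^ 3 * ln (real L)"
    have "0 < x"
      using L c p by (simp add: x_def)
    then have "1 \<le> r" "x \<le> real r"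
      using r by (simp_all add: x_def) linarith+
    then have "1 - probB p r (\<lambda>S. dr r S = r) \<le> K * \<rho> ^ r"
      by (intro fail)
    also have "\<dots> \<le> K * \<rho> powr x"
      using K \<rho> \<open>x \<le> real r\<close> by (intro mult_left_mono power_le_powr_of_le) auto
    also have "\<rho> powr x = real L powr - \<kappa>"
      using L p \<rho> by (simp add: powr_def x_def c_def)
    finally show ?thesis .
  qed
  with c K show "\<exists>c>0. \<exists>C>0. \<forall>L\<ge>2. let r = nat \<lceil>c / p ^ 3 * ln (real L)\<rceil>
      in 1 - probB p r (\<lambda>S. dr r S = r) \<le> C * real L powr - \<kappa>"
    by (auto simp: Let_def)
qed

end
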